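(* Let $\mathbf v\in E^*_{[s,t]}V$ be nonzero with $L_1\mathbf v=L_2\mathbf v=\mathbf 0$, let $r=d-s-t$, $m_1=r-s$, $m_2=s-t$. Then $m_1,m_2\ge 0$, i.e. $r\ge s\ge t$, and: (i) $(r,s,t)=(m_1+m_2+t,\;m_2+t,\;t)$; (ii) $t\in\{0,1,\dots,\lfloor d/3\rfloor\}$; (iii) $m_1=d-3t-2m_2$; (iv) $m_2\in\{0,1,\dots,\lfloor (d-3t)/2\rfloor\}$.
   Context: Let $d\ge1$, $\mathbb F_3=\{0,1,2\}$, $X=\mathbb F_3^d$, $V=\mathbb C^X$ with standard basis $\{\hat y:y\in X\}$. $E^*_{[s,t]}$ is the diagonal projection onto the span of those $\hat y$ with $y$ having exactly $s$ coordinates equal to $1$ and $t$ equal to $2$. Define linear operators on $V$: $L_1\hat y$ is the sum of $\hat z$ over all $z$ obtained from $y$ by changing exactly one coordinate equal to $1$ into $0$ (empty sum $=0$), and $L_2$ similarly changes one coordinate $2\mapsto 1$. *)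

theory Defs
  imports Complex_Main
begin

text \<open>Points of X = F_3^d are lists of length d with entries in {0,1,2}.
  Vectors of V = C^X are functions from lists to complex numbers that vanish
  outside X.\<close>

definition Xset :: "nat \<Rightarrow> nat list set" where
  "Xset d = {y. length y = d \<and> set y \<subseteq> {0,1,2}}"

definition in_V :: "nat \<Rightarrow> (nat list \<Rightarrow> complex) \<Rightarrow> bool" where
  "in_V d v \<longleftrightarrow> (\<forall>y. y \<notin> Xset d \<longrightarrow> v y = 0)"

definition cnt :: "nat \<Rightarrow> nat list \<Rightarrow> nat" where
  "cnt a y = length (filter (\<lambda>x. x = a) y)"

definition in_Estar :: "nat \<Rightarrow> nat \<Rightarrow> nat \<Rightarrow> (nat list \<Rightarrow> complex) \<Rightarrow> bool" where
  "in_Estar d s t v \<longleftrightarrow> in_V d v \<and>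
     (\<forall>y. v y \<noteq> 0 \<longrightarrow> cnt 1 y = s \<and> cnt 2 y = t)"

definition basis_vec :: "nat list \<Rightarrow> nat list \<Rightarrow> complex" where
  "basis_vec y = (\<lambda>z. if z = y then 1 else 0)"

definition Lop :: "nat \<Rightarrow> nat \<Rightarrow> (nat list \<Rightarrow> complex) \<Rightarrow> (nat list \<Rightarrow> complex)" where
  "Lop d a v = (\<lambda>z. \<Sum>y\<in>Xset d. v y *
      (\<Sum>i\<in>{i. i < d \<and> y ! i = a}. basis_vec (y[i := a - 1]) z))"

definition L1 :: "nat \<Rightarrow> (nat list \<Rightarrow> complex) \<Rightarrow> (nat list \<Rightarrow> complex)" where
  "L1 d = Lop d 1"

definition L2 :: "nat \<Rightarrow> (nat list \<Rightarrow> complex) \<Rightarrow> (nat list \<Rightarrow> complex)" where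
  "L2 d = Lop d 2"

end

theory Submission
  imports Defs
begin

text \<open>An sl2 argument. Write L for the operator changing one coordinate a into b and
  R for its adjoint (changing b into a). On a basis vector y the commutator L R - R L is
  multiplication by the number of coordinates of y equal to b minus the number equal to a,
  a constant on E*_[s,t] V. So if L v = 0 then
  \<open>\<parallel>R v\<parallel>\<^sup>2 = \<langle>v, L R v\<rangle> = (#b - #a) \<parallel>v\<parallel>\<^sup>2\<close>, forcing #a \<le> #b.
  For L_1 this gives s \<le> r, for L_2 it gives t \<le> s; the rest is arithmetic.\<close>

text \<open>On basis vectors, coord_change n a b sends y to the sum of the basis vectors of all
  z obtained from y by changing one coordinate equal to a into b; here it is written on
  coefficient functions, so L_a agrees with coord_change d a (a - 1) on X.\<close>
definition coord_change :: "nat \<Rightarrow> nat \<Rightarrow> nat \<Rightarrow> (nat list \<Rightarrow> complex) \<Rightarrow> nat list \<Rightarrow> complex" where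
  "coord_change n a b g z = (\<Sum>i<n. if z ! i = b then g (z[i := a]) else 0)"

lemma finite_Xset: "finite (Xset d)"
proof -
  have "Xset d = {xs. set xs \<subseteq> {0,1,2} \<and> length xs = d}" unfolding Xset_def by auto
  then show ?thesis using finite_lists_length_eq[of "{0,1,2::nat}" d] by simp
qed

lemma length_of_Xset: "z \<in> Xset d \<Longrightarrow> length z = d"
  unfolding Xset_def by auto

lemma list_update_in_Xset: "z \<in> Xset d \<Longrightarrow> a \<le> 2 \<Longrightarrow> z[i := a] \<in> Xset d"
  unfolding Xset_def using set_update_subset_insert[of z i a] by auto

lemma list_update_eq_iff:
  assumes "i < length y"
  shows "(y ! i = a \<and> z = y[i := c]) \<longleftrightarrow> (length z = length y \<and> z ! i = c \<and> y = z[i := a])"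
proof
  assume h: "y ! i = a \<and> z = y[i := c]"
  then have "z[i := a] = y" by (metis list_update_id list_update_overwrite)
  moreover have "length z = length y" "z ! i = c" using h assms by auto
  ultimately show "length z = length y \<and> z ! i = c \<and> y = z[i := a]"
    by simp
next
  assume h: "length z = length y \<and> z ! i = c \<and> y = z[i := a]"
  then have "y ! i = a" using assms by (metis nth_list_update_eq)
  moreover have "z = y[i := c]" using h by (metis list_update_id list_update_overwrite)
  ultimately show "y ! i = a \<and> z = y[i := c]" ..
qed

lemma length_eq_cnt_sum: "z \<in> Xset d \<Longrightarrow> d = cnt 0 z + cnt 1 z + cnt 2 z"
proof -
  have "set z \<subseteq> {0,1,2} \<Longrightarrow> length z = cnt 0 z + cnt 1 z + cnt 2 z"
    unfolding cnt_def by (induction z) auto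
  then show "z \<in> Xset d \<Longrightarrow> d = cnt 0 z + cnt 1 z + cnt 2 z"
    unfolding Xset_def by auto
qed

lemma sum_count_const:
  assumes "length z = n"
  shows "(\<Sum>i<n. if z ! i = b then c else 0) = of_nat (cnt b z) * (c::'a::semiring_1)"
proof -
  have "{i\<in>{..<n}. z ! i = b} = {i. i < length z \<and> z ! i = b}" using assms by auto
  then show ?thesis
    by (simp add: sum.inter_filter[symmetric] cnt_def length_filter_conv_card)
qed

lemma coord_change_list_update:
  assumes "a \<noteq> b" "i < n" "z ! i = b" "length z = n"
  shows "coord_change n b a f (z[i := a])
    = f z + (\<Sum>j<n. if j \<noteq> i \<and> z ! j = a then f (z[i := a, j := b]) else 0)"
proof -
  have "coord_change n b a f (z[i := a])
      = (\<Sum>j<n. (if j = i then f z else 0) + (if j \<noteq> i \<and> z ! j = a then f (z[i := a, j := b]) else 0))"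
    unfolding coord_change_def using assms
    by (intro sum.cong refl) (auto simp: nth_list_update)
  then show ?thesis
    using assms by (simp add: sum.distrib)
qed

lemma coord_change_commutator:
  assumes "a \<noteq> b" "length z = n"
  shows "coord_change n a b (coord_change n b a f) z - coord_change n b a (coord_change n a b f) z
     = (of_nat (cnt b z) - of_nat (cnt a z)) * f z"
proof -
  define F where "F i j = f (z[i := a, j := b])" for i j
  have ab: "coord_change n a b (coord_change n b a f) z = (\<Sum>i<n. if z ! i = b then f z else 0)
      + (\<Sum>i<n. \<Sum>j<n. if z ! i = b \<and> j \<noteq> i \<and> z ! j = a then F i j else 0)"
  proof -
    have "coord_change n a b (coord_change n b a f) z = (\<Sum>i<n. (if z ! i = b then f z else 0)
        + (\<Sum>j<n. if z ! i = b \<and> j \<noteq> i \<and> z ! j = a then F i j else 0))"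
      unfolding coord_change_def[of n a b] F_def using assms
      by (intro sum.cong refl) (auto simp: coord_change_list_update)
    then show ?thesis by (simp add: sum.distrib)
  qed
  have ba: "coord_change n b a (coord_change n a b f) z = (\<Sum>j<n. if z ! j = a then f z else 0)
      + (\<Sum>j<n. \<Sum>i<n. if z ! j = a \<and> i \<noteq> j \<and> z ! i = b then F i j else 0)"
  proof -
    have "coord_change n b a (coord_change n a b f) z = (\<Sum>j<n. (if z ! j = a then f z else 0)
        + (\<Sum>i<n. if z ! j = a \<and> i \<noteq> j \<and> z ! i = b then F i j else 0))"
      unfolding coord_change_def[of n b a] F_def using assms coord_change_list_update[of b a]
      by (intro sum.cong refl) (auto simp: list_update_swap intro!: sum.cong)
    then show ?thesis by (simp add: sum.distrib)
  qed
  have "(\<Sum>j<n. \<Sum>i<n. if z ! j = a \<and> i \<noteq> j \<and> z ! i = b then F i j else 0)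
     = (\<Sum>i<n. \<Sum>j<n. if z ! i = b \<and> j \<noteq> i \<and> z ! j = a then F i j else 0)"
    by (subst sum.swap) (auto intro!: sum.cong)
  then show ?thesis
    unfolding ab ba using assms(2) by (simp add: sum_count_const algebra_simps)
qed

lemma coord_change_adjoint:
  assumes "a \<le> 2" "b \<le> 2"
  shows "(\<Sum>z\<in>Xset d. cnj (h z) * coord_change d a b g z) = (\<Sum>y\<in>Xset d. g y * cnj (coord_change d b a h y))"
proof -
  have lhs: "(\<Sum>z\<in>Xset d. cnj (h z) * coord_change d a b g z)
      = (\<Sum>i<d. \<Sum>z\<in>{z\<in>Xset d. z ! i = b}. cnj (h z) * g (z[i := a]))"
    unfolding coord_change_def sum_distrib_left
    by (subst sum.swap) (simp add: sum.inter_filter finite_Xset if_distrib cong: if_cong)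
  have rhs: "(\<Sum>y\<in>Xset d. g y * cnj (coord_change d b a h y))
      = (\<Sum>i<d. \<Sum>y\<in>{y\<in>Xset d. y ! i = a}. g y * cnj (h (y[i := b])))"
    unfolding coord_change_def cnj_sum sum_distrib_left
    by (subst sum.swap) (simp add: sum.inter_filter finite_Xset if_distrib cong: if_cong)
  have "(\<Sum>z\<in>{z\<in>Xset d. z ! i = b}. cnj (h z) * g (z[i := a]))
      = (\<Sum>y\<in>{y\<in>Xset d. y ! i = a}. g y * cnj (h (y[i := b])))" if "i < d" for i
    by (rule sum.reindex_bij_witness[where i = "\<lambda>y. y[i := b]" and j = "\<lambda>z. z[i := a]"])
      (use that assms list_update_in_Xset length_of_Xset in auto)
  then show ?thesis
    unfolding lhs rhs by (intro sum.cong[OF refl]) simp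
qed

lemma Lop_eq_coord_change:
  assumes "z \<in> Xset d" "a \<le> 2"
  shows "Lop d a v z = coord_change d a (a - 1) v z"
proof -
  have "Lop d a v z = (\<Sum>y\<in>Xset d. \<Sum>i<d. if y ! i = a \<and> z = y[i := a - 1] then v y else 0)"
    unfolding Lop_def basis_vec_def
  proof (intro sum.cong refl)
    fix y
    have "{i. i < d \<and> y ! i = a} = {i\<in>{..<d}. y ! i = a}" by auto
    then show "v y * (\<Sum>i\<in>{i. i < d \<and> y ! i = a}. if z = y[i := a - 1] then 1 else 0)
        = (\<Sum>i<d. if y ! i = a \<and> z = y[i := a - 1] then v y else 0)"
      by (simp add: sum.inter_filter[symmetric] sum_distrib_left)
  qed
  also have "\<dots> = (\<Sum>i<d. \<Sum>y\<in>Xset d. if y ! i = a \<and> z = y[i := a - 1] then v y else 0)"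
    by (rule sum.swap)
  also have "\<dots> = (\<Sum>i<d. if z ! i = a - 1 then v (z[i := a]) else 0)"
  proof (intro sum.cong refl)
    fix i assume "i \<in> {..<d}"
    then have "(\<Sum>y\<in>Xset d. if y ! i = a \<and> z = y[i := a - 1] then v y else 0)
        = (\<Sum>y\<in>Xset d. if z ! i = a - 1 then (if y = z[i := a] then v y else 0) else 0)"
    proof (intro sum.cong refl)
      fix y assume "y \<in> Xset d"
      then have "length y = d" "length z = d" using assms(1) length_of_Xset by auto
      with \<open>i \<in> {..<d}\<close> have "(y ! i = a \<and> z = y[i := a - 1]) \<longleftrightarrow> (z ! i = a - 1 \<and> y = z[i := a])"
        using list_update_eq_iff[of i y a z "a - 1"] by auto
      then show "(if y ! i = a \<and> z = y[i := a - 1] then v y else 0)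
          = (if z ! i = a - 1 then (if y = z[i := a] then v y else 0) else 0)"
        by auto
    qed
    also have "\<dots> = (if z ! i = a - 1 then v (z[i := a]) else 0)"
      using list_update_in_Xset[OF assms] by (simp add: finite_Xset sum.delta')
    finally show "(\<Sum>y\<in>Xset d. if y ! i = a \<and> z = y[i := a - 1] then v y else 0)
        = (if z ! i = a - 1 then v (z[i := a]) else 0)" .
  qed
  finally show ?thesis unfolding coord_change_def .
qed

lemma coord_change_comp_of_kernel:
  assumes "a \<noteq> b" "a \<le> 2" "b \<le> 2"
    and kernel: "\<And>y. y \<in> Xset d \<Longrightarrow> coord_change d a b v y = 0"
    and counts: "\<And>y. v y \<noteq> 0 \<Longrightarrow> cnt a y = ka \<and> cnt b y = kb"
    and z: "z \<in> Xset d"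
  shows "coord_change d a b (coord_change d b a v) z = (of_nat kb - of_nat ka) * v z"
proof -
  have "coord_change d b a (coord_change d a b v) z = 0"
    unfolding coord_change_def[of d b a] using kernel list_update_in_Xset[OF z \<open>b \<le> 2\<close>]
    by (intro sum.neutral) simp
  then have "coord_change d a b (coord_change d b a v) z = (of_nat (cnt b z) - of_nat (cnt a z)) * v z"
    using coord_change_commutator[OF \<open>a \<noteq> b\<close> length_of_Xset[OF z], of v] by simp
  then show ?thesis
    using counts[of z] by (cases "v z = 0") auto
qed

lemma count_le_of_coord_change_kernel:
  assumes "a \<noteq> b" "a \<le> 2" "b \<le> 2"
    and "in_V d v" "v \<noteq> (\<lambda>_. 0)"
    and kernel: "\<And>y. y \<in> Xset d \<Longrightarrow> coord_change d a b v y = 0"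
    and counts: "\<And>y. v y \<noteq> 0 \<Longrightarrow> cnt a y = ka \<and> cnt b y = kb"
  shows "ka \<le> kb"
proof -
  define k :: real where "k = real kb - real ka"
  define g where "g = coord_change d b a v"
  have "(\<Sum>z\<in>Xset d. cnj (v z) * coord_change d a b g z) = of_real (k * (\<Sum>z\<in>Xset d. (cmod (v z))\<^sup>2))"
    unfolding of_real_mult of_real_sum sum_distrib_left
  proof (intro sum.cong refl)
    fix z assume "z \<in> Xset d"
    then have "coord_change d a b g z = of_real k * v z"
      unfolding g_def k_def using coord_change_comp_of_kernel[OF assms(1-3) kernel counts] by simp
    then show "cnj (v z) * coord_change d a b g z = of_real k * of_real ((cmod (v z))\<^sup>2)"
      using complex_norm_square[of "v z"] by (simp add: mult.commute)
  qed
  moreover have "(\<Sum>z\<in>Xset d. cnj (v z) * coord_change d a b g z) = of_real (\<Sum>z\<in>Xset d. (cmod (g z))\<^sup>2)"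
    unfolding coord_change_adjoint[OF \<open>a \<le> 2\<close> \<open>b \<le> 2\<close>] g_def of_real_sum
    by (intro sum.cong refl) (simp only: complex_norm_square)
  ultimately have "k * (\<Sum>z\<in>Xset d. (cmod (v z))\<^sup>2) = (\<Sum>z\<in>Xset d. (cmod (g z))\<^sup>2)"
    by (metis of_real_eq_iff)
  moreover have "(\<Sum>z\<in>Xset d. (cmod (g z))\<^sup>2) \<ge> 0"
    by (intro sum_nonneg) simp
  moreover have "(\<Sum>z\<in>Xset d. (cmod (v z))\<^sup>2) > 0"
  proof -
    obtain y where "v y \<noteq> 0" using \<open>v \<noteq> (\<lambda>_. 0)\<close> by auto
    moreover have "y \<in> Xset d" using calculation \<open>in_V d v\<close> unfolding in_V_def by blast
    ultimately show ?thesis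
      using finite_Xset by (intro sum_pos2[of _ y]) auto
  qed
  ultimately have "k \<ge> 0"
    by (metis mult_neg_pos not_le)
  then show ?thesis unfolding k_def by simp
qed

lemma count_le_of_Lop_kernel:
  assumes "1 \<le> a" "a \<le> 2"
    and "in_V d v" "v \<noteq> (\<lambda>_. 0)" "Lop d a v = (\<lambda>_. 0)"
    and "\<And>y. v y \<noteq> 0 \<Longrightarrow> cnt a y = ka \<and> cnt (a - 1) y = kb"
  shows "ka \<le> kb"
proof (rule count_le_of_coord_change_kernel[of a "a - 1"])
  fix y assume "y \<in> Xset d"
  then show "coord_change d a (a - 1) v y = 0"
    using Lop_eq_coord_change[of y d a v] assms(2,5) by simp
qed (use assms in auto)

lemma counts_of_in_Estar:
  assumes "in_Estar d s t v" "v z \<noteq> 0"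
  shows "cnt 0 z = d - s - t" "cnt 1 z = s" "cnt 2 z = t" "s + t \<le> d"
proof -
  have "z \<in> Xset d" using assms unfolding in_Estar_def in_V_def by blast
  moreover have "cnt 1 z = s" "cnt 2 z = t" using assms unfolding in_Estar_def by auto
  ultimately show "cnt 0 z = d - s - t" "cnt 1 z = s" "cnt 2 z = t" "s + t \<le> d"
    using length_eq_cnt_sum[of z d] by auto
qed

theorem lemma3p6:
  fixes d s t :: nat and v :: "nat list \<Rightarrow> complex"
  assumes "d \<ge> 1"
    and "in_Estar d s t v"
    and "v \<noteq> (\<lambda>_. 0)"
    and "L1 d v = (\<lambda>_. 0)"
    and "L2 d v = (\<lambda>_. 0)"
  shows "let r = int d - int s - int t; m1 = r - int s; m2 = int s - int t in
    m1 \<ge> 0 \<and> m2 \<ge> 0 \<and> r \<ge> int s \<and> int s \<ge> int t \<and>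
    (r, int s, int t) = (m1 + m2 + int t, m2 + int t, int t) \<and>
    int t \<in> {0 .. int d div 3} \<and>
    m1 = int d - 3 * int t - 2 * m2 \<and>
    m2 \<in> {0 .. (int d - 3 * int t) div 2}"
proof -
  have "in_V d v" using assms(2) unfolding in_Estar_def by simp
  obtain z where "v z \<noteq> 0" using assms(3) by auto
  then have "s + t \<le> d" using counts_of_in_Estar[OF assms(2)] by blast
  have "s \<le> d - s - t"
    using count_le_of_Lop_kernel[of 1] \<open>in_V d v\<close> assms(3,4) counts_of_in_Estar[OF assms(2)]
    unfolding L1_def by simp
  moreover have "t \<le> s"
    using count_le_of_Lop_kernel[of 2] \<open>in_V d v\<close> assms(3,5) counts_of_in_Estar[OF assms(2)]
    unfolding L2_def by simp
  ultimately have "int t \<le> int s" "2 * int s + int t \<le> int d"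
    using \<open>s + t \<le> d\<close> by auto
  moreover from this have "int t \<le> int d div 3" "int s - int t \<le> (int d - 3 * int t) div 2"
    by linarith+
  ultimately show ?thesis
    by (simp add: Let_def)
qed

end
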